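(* Let $S$ be a monoid in which the unique maximal right ideal $\mathfrak{M}$ is two-sided. Let $A$ be a right $S$-act and $B$ a maximal subact of $A$ such that there exists $a\in A\setminus B$ with $\mathfrak{M}=\{s\in S\mid as\in B\}$. Then for every proper right ideal $I$ of $S$ we have $AI\neq A$.
   Context: $S$ is a monoid with identity $1$ having at least one right non-invertible element. A (right) $S$-act is a nonempty set $A$ with an action $(a,s)\mapsto as$ satisfying $a1=a$, $a(st)=(as)t$. A subact is a nonempty subset closed under the action; a maximal subact is a proper subact not properly contained in another proper subact. $\mathfrak{M}=\{s\in S\mid st\neq1\ \forall t\in S\}$ is the unique maximal right ideal of $S$, containing every proper right ideal. For a right ideal $I$, $AI=\{as\mid a\in A, s\in I\}$. *)

theory Defs
  imports Main
begin

text \<open>The monoid S is the type 'a (class monoid_mult). A right S-act is a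
nonempty carrier set A with an action act :: 'b => 'a => 'b.\<close>

definition is_act :: "'b set \<Rightarrow> ('b \<Rightarrow> 'a::monoid_mult \<Rightarrow> 'b) \<Rightarrow> bool" where
  "is_act A act \<longleftrightarrow> A \<noteq> {} \<and> (\<forall>a\<in>A. \<forall>s. act a s \<in> A)
     \<and> (\<forall>a\<in>A. act a 1 = a) \<and> (\<forall>a\<in>A. \<forall>s t. act a (s * t) = act (act a s) t)"

definition is_subact :: "'b set \<Rightarrow> ('b \<Rightarrow> 'a::monoid_mult \<Rightarrow> 'b) \<Rightarrow> 'b set \<Rightarrow> bool" where
  "is_subact A act B \<longleftrightarrow> B \<noteq> {} \<and> B \<subseteq> A \<and> (\<forall>b\<in>B. \<forall>s. act b s \<in> B)"

definition is_maximal_subact :: "'b set \<Rightarrow> ('b \<Rightarrow> 'a::monoid_mult \<Rightarrow> 'b) \<Rightarrow> 'b set \<Rightarrow> bool" where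
  "is_maximal_subact A act B \<longleftrightarrow> is_subact A act B \<and> B \<noteq> A \<and>
     (\<forall>C. is_subact A act C \<and> C \<noteq> A \<and> B \<subseteq> C \<longrightarrow> C = B)"

definition right_ideal :: "'a::monoid_mult set \<Rightarrow> bool" where
  "right_ideal I \<longleftrightarrow> I \<noteq> {} \<and> (\<forall>s\<in>I. \<forall>t. s * t \<in> I)"

definition left_ideal :: "'a::monoid_mult set \<Rightarrow> bool" where
  "left_ideal I \<longleftrightarrow> I \<noteq> {} \<and> (\<forall>s\<in>I. \<forall>t. t * s \<in> I)"

definition max_right_ideal :: "'a::monoid_mult set" where
  "max_right_ideal = {s. \<forall>t. s * t \<noteq> 1}"

definition act_set :: "'b set \<Rightarrow> ('b \<Rightarrow> 'a \<Rightarrow> 'b) \<Rightarrow> 'a set \<Rightarrow> 'b set" where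
  "act_set A act I = {act a s | a s. a \<in> A \<and> s \<in> I}"

end

theory Submission
  imports Defs
begin

text \<open>Every proper right ideal \<open>I\<close> lies in \<open>\<M>\<close>. Since \<open>B\<close> is maximal and \<open>a \<notin> B\<close>,
  \<open>A = B \<union> aS\<close>. If \<open>AI = A\<close>, write \<open>a = bs\<close> with \<open>s \<in> I\<close>; then \<open>b \<notin> B\<close>, so \<open>b = au\<close> and
  \<open>a = a(us)\<close>. But \<open>us \<in> \<M>\<close> because \<open>\<M>\<close> is two-sided, whence \<open>a(us) \<in> B\<close>, a contradiction.\<close>

lemma right_ideal_subset_max_right_ideal:
  assumes "right_ideal I" and "I \<noteq> UNIV"
  shows "I \<subseteq> max_right_ideal"
proof
  fix s assume s: "s \<in> I"
  show "s \<in> max_right_ideal"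
  proof (rule ccontr)
    assume "s \<notin> max_right_ideal"
    then obtain t where "s * t = 1"
      unfolding max_right_ideal_def by auto
    with assms(1) s have "1 \<in> I"
      unfolding right_ideal_def by metis
    with assms(1) have "I = UNIV"
      unfolding right_ideal_def by (metis UNIV_eq_I mult_1_left)
    with assms(2) show False ..
  qed
qed

lemma subact_Un:
  assumes "is_subact A act B" and "is_subact A act C"
  shows "is_subact A act (B \<union> C)"
  using assms unfolding is_subact_def by blast

lemma subact_cyclic:
  assumes "is_act A act" and "a \<in> A"
  shows "is_subact A act (range (act a))"
proof -
  have "act (act a t) s \<in> range (act a)" for t s
    using assms unfolding is_act_def by (metis rangeI)
  then show ?thesis
    using assms unfolding is_act_def is_subact_def by blast
qed

lemma maximal_subact_Un_cyclic:
  assumes act: "is_act A act" and maxB: "is_maximal_subact A act B"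
    and "a \<in> A" and "a \<notin> B"
  shows "B \<union> range (act a) = A"
proof (rule ccontr)
  assume ne: "B \<union> range (act a) \<noteq> A"
  have "is_subact A act B"
    using maxB unfolding is_maximal_subact_def by blast
  then have "is_subact A act (B \<union> range (act a))"
    using subact_Un subact_cyclic[OF act \<open>a \<in> A\<close>] by blast
  with maxB ne have "B \<union> range (act a) = B"
    unfolding is_maximal_subact_def by blast
  moreover have "a \<in> range (act a)"
    using act \<open>a \<in> A\<close> unfolding is_act_def by (metis rangeI)
  ultimately show False
    using \<open>a \<notin> B\<close> by blast
qed

theorem theorem2p4:
  fixes A :: "'b set" and act :: "'b \<Rightarrow> 'a::monoid_mult \<Rightarrow> 'b" and B :: "'b set"
  assumes nonunit: "\<exists>s::'a. \<forall>t. s * t \<noteq> 1"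
    and twosided: "left_ideal (max_right_ideal :: 'a set)"
    and act: "is_act A act"
    and maxB: "is_maximal_subact A act B"
    and a: "\<exists>a\<in>A - B. (max_right_ideal :: 'a set) = {s. act a s \<in> B}"
  shows "\<forall>I::'a set. right_ideal I \<and> I \<noteq> UNIV \<longrightarrow> act_set A act I \<noteq> A"
proof (intro allI impI notI)
  fix I :: "'a set"
  assume I: "right_ideal I \<and> I \<noteq> UNIV" and AI: "act_set A act I = A"
  obtain a where aA: "a \<in> A" and aB: "a \<notin> B" and M: "max_right_ideal = {s. act a s \<in> B}"
    using a by blast
  from AI aA obtain b s where "b \<in> A" "s \<in> I" and a_eq: "a = act b s"
    unfolding act_set_def by blast
  have "b \<notin> B"
  proof
    assume "b \<in> B"
    moreover have "is_subact A act B"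
      using maxB by (simp add: is_maximal_subact_def)
    ultimately have "act b s \<in> B"
      by (simp add: is_subact_def)
    with aB a_eq show False by simp
  qed
  then obtain u where "b = act a u"
    using \<open>b \<in> A\<close> maximal_subact_Un_cyclic[OF act maxB aA aB] by blast
  with act aA a_eq have "act a (u * s) = a"
    unfolding is_act_def by metis
  moreover have "u * s \<in> max_right_ideal"
    using twosided \<open>s \<in> I\<close> right_ideal_subset_max_right_ideal[of I] I
    unfolding left_ideal_def by blast
  ultimately show False
    using M aB by (metis mem_Collect_eq)
qed

end
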